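(* Let $U$ be the open unit disk in $\mathbb R^{2n}$ with the canonical symplectic form $\omega=\sum_{i=1}^n dx^i\wedge dx^{i+n}$. If $B_k\in\mathcal P^k(U)$ is $d$-closed and $0<k\le n$, then there exists $B'_{k-1}\in\mathcal P'^{k-1}(U)$ such that $B_k=dB'_{k-1}$.
   Context: $L(A)=\omega\wedge A$, $\Lambda(A)=\frac12(\omega^{-1})^{ij}\, i_{\partial_{x^i}} i_{\partial_{x^j}}A$; a $k$-form $B$ ($k\le n$) is primitive if $\Lambda B=0$; $\mathcal P^k(U)$ is the space of smooth primitive $k$-forms on $U$. For $B\in\mathcal P^s(U)$ write uniquely $dB=B^0_{s+1}+\omega\wedge B^1_{s-1}$ with $B^0_{s+1},B^1_{s-1}$ primitive; set $\partial_-B=B^1_{s-1}$. $\mathcal P'^{k}(U)$ denotes the space of primitive $k$-forms $B$ with $\partial_-B=0$. *)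

theory Defs
  imports "HOL-Analysis.Analysis"
begin

text \<open>Points of R^(2n) are functions x :: nat => real with x i = 0 for i >= 2n
  (coordinates x^1..x^(2n) of the paper are indices 0..2n-1 here). An (algebraic) form at a point
  is a coefficient function a :: nat set => real: a I is the coefficient of dx^(i_1) wedge ... wedge
  dx^(i_k), where I = {i_1 < ... < i_k}. A differential form is a map from points to such
  coefficient functions; only its values on U matter.\<close>

type_synonym point = "nat \<Rightarrow> real"
type_synonym alg_form = "nat set \<Rightarrow> real"
type_synonym dform = "point \<Rightarrow> alg_form"

definition unit_disk :: "nat \<Rightarrow> point set" where
  "unit_disk n = {x. (\<forall>i\<ge>2*n. x i = 0) \<and> (\<Sum>i<2*n. (x i)^2) < 1}"

definition zero_form :: alg_form where
  "zero_form = (\<lambda>I. 0)"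

definition is_alg_form :: "nat \<Rightarrow> nat \<Rightarrow> alg_form \<Rightarrow> bool" where
  "is_alg_form n k a \<longleftrightarrow> (\<forall>I. a I \<noteq> 0 \<longrightarrow> I \<subseteq> {..<2*n} \<and> card I = k)"

text \<open>sign of dx^I wedge dx^J = eps I J * dx^(I union J) for disjoint I, J\<close>
definition eps :: "nat set \<Rightarrow> nat set \<Rightarrow> real" where
  "eps I J = (-1) ^ card {(p,q). p \<in> I \<and> q \<in> J \<and> q < p}"

definition wedge :: "alg_form \<Rightarrow> alg_form \<Rightarrow> alg_form" where
  "wedge a b = (\<lambda>K. \<Sum>I\<in>Pow K. eps I (K - I) * a I * b (K - I))"

definition omega :: "nat \<Rightarrow> alg_form" where
  "omega n = (\<lambda>K. if \<exists>i<n. K = {i, i + n} then 1 else 0)"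

definition Lop :: "nat \<Rightarrow> alg_form \<Rightarrow> alg_form" where
  "Lop n a = wedge (omega n) a"

definition interior :: "nat \<Rightarrow> alg_form \<Rightarrow> alg_form" where
  "interior j a = (\<lambda>J. if j \<in> J then 0
                      else (-1) ^ card {i\<in>J. i < j} * a (insert j J))"

text \<open>entries of the inverse of the matrix (omega_ij) = (omega(d_i, d_j)), omega_(i,i+n) = 1\<close>
definition omega_inv :: "nat \<Rightarrow> nat \<Rightarrow> nat \<Rightarrow> real" where
  "omega_inv n i j = (if i < n \<and> j = i + n then -1
                      else if j < n \<and> i = j + n then 1 else 0)"

definition Lambda :: "nat \<Rightarrow> alg_form \<Rightarrow> alg_form" where
  "Lambda n a = (\<lambda>K. (1/2) * (\<Sum>i<2*n. \<Sum>j<2*n.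
       omega_inv n i j * interior i (interior j a) K))"

definition pd :: "nat \<Rightarrow> (point \<Rightarrow> real) \<Rightarrow> point \<Rightarrow> real" where
  "pd j f x = deriv (\<lambda>t. f (x(j := x j + t))) 0"

definition iter_pd :: "nat list \<Rightarrow> (point \<Rightarrow> real) \<Rightarrow> point \<Rightarrow> real" where
  "iter_pd js f = fold pd js f"

definition smooth_on :: "nat \<Rightarrow> point set \<Rightarrow> (point \<Rightarrow> real) \<Rightarrow> bool" where
  "smooth_on n U f \<longleftrightarrow> (\<forall>js. set js \<subseteq> {..<2*n} \<longrightarrow>
      continuous_on U (iter_pd js f) \<and>
      (\<forall>j<2*n. \<forall>x\<in>U. (\<lambda>t. iter_pd js f (x(j := x j + t))) differentiable (at 0)))"

definition smooth_form :: "nat \<Rightarrow> nat \<Rightarrow> dform \<Rightarrow> bool" where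
  "smooth_form n k B \<longleftrightarrow> (\<forall>x. is_alg_form n k (B x)) \<and>
      (\<forall>I. smooth_on n (unit_disk n) (\<lambda>x. B x I))"

text \<open>exterior derivative: d(f dx^I) = sum_j (d_j f) dx^j wedge dx^I\<close>
definition ext_d :: "nat \<Rightarrow> dform \<Rightarrow> dform" where
  "ext_d n B = (\<lambda>x K. if K \<subseteq> {..<2*n} then
       (\<Sum>j\<in>K. (-1) ^ card {i\<in>K - {j}. i < j} * pd j (\<lambda>y. B y (K - {j})) x) else 0)"

definition Pforms :: "nat \<Rightarrow> nat \<Rightarrow> dform set" where
  "Pforms n k = {B. k \<le> n \<and> smooth_form n k B \<and>
      (\<forall>x\<in>unit_disk n. Lambda n (B x) = zero_form)}"

text \<open>partial_minus B = B^1_(s-1), where dB = B^0_(s+1) + omega wedge B^1_(s-1), both primitive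
  (decomposition taken pointwise on U); for s = 0 it is 0.\<close>
definition partial_minus :: "nat \<Rightarrow> nat \<Rightarrow> dform \<Rightarrow> point \<Rightarrow> alg_form" where
  "partial_minus n s B x = (if s = 0 then zero_form else
     (THE c. is_alg_form n (s - 1) c \<and> Lambda n c = zero_form \<and>
        (\<exists>a. is_alg_form n (s + 1) a \<and> Lambda n a = zero_form \<and>
             ext_d n B x = (\<lambda>K. a K + Lop n c K))))"

definition Pprime :: "nat \<Rightarrow> nat \<Rightarrow> dform set" where
  "Pprime n k = {B \<in> Pforms n k. \<forall>x\<in>unit_disk n. partial_minus n k B x = zero_form}"

end

theory Submission
  imports Defs
begin

text \<open>The Poincare homotopy operator \<open>(h B)(x) = \<integral>\<^sub>0\<^sup>1 t\<^bsup>k-1\<^esup> \<iota>\<^sub>x B(t x) dt\<close> satisfies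
  \<open>d(h B) = B\<close> for a closed \<open>k\<close>-form \<open>B\<close> on the disk: differentiating under the integral and
  using \<open>d B = 0\<close> (Cartan's formula) turns the coefficients of \<open>d(h B)\<close> into
  \<open>\<integral>\<^sub>0\<^sup>1 d/dt (t\<^sup>k B(t x)) dt\<close>. As \<open>\<Lambda>\<close> is contraction with the constant bivector \<open>\<omega>\<^sup>-\<^sup>1\<close>,
  it commutes with \<open>\<iota>\<^sub>x\<close>, so \<open>h B\<close> is primitive along with \<open>B\<close>. Finally, if
  \<open>d(h B) = B\<^sup>0 + \<omega> \<and> B\<^sup>1\<close> with both parts primitive, then \<open>L B\<^sup>1 = B - B\<^sup>0\<close> is primitive too, and
  \<open>[\<Lambda>, L] = n - deg\<close> gives \<open>(n - k + 2) B\<^sup>1 = \<Lambda> L B\<^sup>1 = 0\<close>, i.e. \<open>\<partial>\<^sub>- (h B) = 0\<close>.\<close>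

section \<open>Interior products and the contraction \<open>\<Lambda>\<close>\<close>

text \<open>\<open>dx\<^sup>i \<and> dx\<^sup>J = insert_sign i J \<cdot> dx\<^bsup>insert i J\<^esup>\<close> for \<open>i \<notin> J\<close>.\<close>
definition insert_sign :: "nat \<Rightarrow> nat set \<Rightarrow> real" where
  "insert_sign i J = (-1) ^ card {l\<in>J. l < i}"

definition pair_sign :: "nat \<Rightarrow> nat \<Rightarrow> nat set \<Rightarrow> real" where
  "pair_sign n m J = insert_sign m J * insert_sign (m + n) J"

lemma zero_form_apply [simp]: "zero_form J = 0"
  by (simp add: zero_form_def)

lemma insert_sign_square [simp]: "insert_sign i J * insert_sign i J = 1"
  by (simp add: insert_sign_def flip: power_add)

lemma pair_sign_square [simp]: "pair_sign n m J * pair_sign n m J = 1"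
  by (simp add: pair_sign_def algebra_simps flip: power_add)

lemma insert_sign_insert:
  assumes "a \<notin> J"
  shows "insert_sign i (insert a J) = (if a < i then - insert_sign i J else insert_sign i J)"
proof -
  have "finite {l\<in>J. l < i}" by (rule finite_subset[of _ "{..<i}"]) auto
  moreover have "{l\<in>insert a J. l < i} = (if a < i then insert a {l\<in>J. l < i} else {l\<in>J. l < i})"
    by auto
  ultimately show ?thesis using assms by (simp add: insert_sign_def)
qed

lemma interior_eq: "interior j a J = (if j \<in> J then 0 else insert_sign j J * a (insert j J))"
  by (simp add: interior_def insert_sign_def)

lemma interior_anticomm: "interior p (interior q a) J = - interior q (interior p a) J"
proof (cases "p = q \<or> p \<in> J \<or> q \<in> J")
  case True then show ?thesis by (auto simp: interior_eq)
next
  case False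
  have "insert q (insert p J) = insert p (insert q J)" by auto
  with False show ?thesis by (auto simp: interior_eq insert_sign_insert)
qed

lemma interior_linear:
  "interior j (\<lambda>L. c * f L) = (\<lambda>J. c * interior j f J)"
  "interior j (\<lambda>L. f L - g L) = (\<lambda>J. interior j f J - interior j g J)"
  "interior j (\<lambda>L. \<Sum>i\<in>A. F i L) = (\<lambda>J. \<Sum>i\<in>A. interior j (F i) J)"
  "interior j (\<lambda>L. - f L) = (\<lambda>J. - interior j f J)"
  "interior j zero_form = zero_form"
  by (auto simp: interior_eq sum_distrib_left algebra_simps)

lemma sum_omega_inv:
  fixes T :: "nat \<Rightarrow> nat \<Rightarrow> real"
  shows "(\<Sum>i<2*n. \<Sum>j<2*n. omega_inv n i j * T i j) = (\<Sum>m<n. T (m+n) m - T m (m+n))"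
proof -
  have lower: "(\<Sum>j<2*n. omega_inv n i j * T i j) = - T i (i+n)" if "i < n" for i
  proof -
    have "(\<Sum>j<2*n. omega_inv n i j * T i j) = (\<Sum>j<2*n. if j = i+n then - T i j else 0)"
      using that by (intro sum.cong) (auto simp: omega_inv_def)
    then show ?thesis using that by simp
  qed
  have upper: "(\<Sum>j<2*n. omega_inv n (m+n) j * T (m+n) j) = T (m+n) m" if "m < n" for m
  proof -
    have "(\<Sum>j<2*n. omega_inv n (m+n) j * T (m+n) j) = (\<Sum>j<2*n. if j = m then T (m+n) j else 0)"
      using that by (intro sum.cong) (auto simp: omega_inv_def)
    then show ?thesis using that by simp
  qed
  have split: "(\<Sum>i<2*n. S i) = (\<Sum>i<n. S i) + (\<Sum>m<n. S (m+n))" for S :: "nat \<Rightarrow> real"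
  proof -
    have "(\<Sum>i<2*n. S i) = (\<Sum>i<n. S i) + (\<Sum>i\<in>{0+n..<n+n}. S i)"
      by (simp add: mult_2 lessThan_atLeast0 sum.atLeastLessThan_concat)
    then show ?thesis by (simp only: sum.shift_bounds_nat_ivl) (simp add: lessThan_atLeast0)
  qed
  have "(\<Sum>i<2*n. \<Sum>j<2*n. omega_inv n i j * T i j)
      = (\<Sum>i<n. \<Sum>j<2*n. omega_inv n i j * T i j) + (\<Sum>m<n. \<Sum>j<2*n. omega_inv n (m+n) j * T (m+n) j)"
    by (rule split)
  also have "\<dots> = (\<Sum>m<n. - T m (m+n)) + (\<Sum>m<n. T (m+n) m)"
    by (simp add: lower upper)
  finally show ?thesis by (simp add: sum_subtractf sum_negf)
qed

lemma Lambda_eq_interior: "Lambda n a J = - (\<Sum>m<n. interior m (interior (m+n) a) J)"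
proof -
  have "Lambda n a J = (1/2) * (\<Sum>m<n. interior (m+n) (interior m a) J - interior m (interior (m+n) a) J)"
    unfolding Lambda_def by (subst sum_omega_inv) simp
  also have "\<dots> = (1/2) * (\<Sum>m<n. - 2 * interior m (interior (m+n) a) J)"
    by (simp add: interior_anticomm[of "_ + n"])
  finally show ?thesis by (simp add: sum_negf flip: sum_distrib_left)
qed

lemma Lambda_linear:
  "Lambda n (\<lambda>L. c * f L) J = c * Lambda n f J"
  "Lambda n (\<lambda>L. f L - g L) J = Lambda n f J - Lambda n g J"
  "Lambda n (\<lambda>L. \<Sum>i\<in>A. F i L) J = (\<Sum>i\<in>A. Lambda n (F i) J)"
  "Lambda n zero_form J = 0"
  by (simp_all add: Lambda_eq_interior interior_linear sum_subtractf sum_negf sum_distrib_left)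
     (rule sum.swap)

lemma Lambda_interior_commute: "Lambda n (interior i a) J = interior i (Lambda n a) J"
proof -
  have "interior m (interior p (interior i a)) J = interior i (interior m (interior p a)) J" for m p
  proof -
    have "interior p (interior i a) = (\<lambda>L. - interior i (interior p a) L)"
      by (rule ext, rule interior_anticomm)
    then show ?thesis by (simp add: interior_linear interior_anticomm[of m i])
  qed
  moreover have "Lambda n a = (\<lambda>J. - (\<Sum>m<n. interior m (interior (m+n) a) J))"
    by (rule ext, rule Lambda_eq_interior)
  ultimately show ?thesis by (simp add: Lambda_eq_interior interior_linear)
qed

lemma Lambda_eq_pair_sum:
  assumes "0 < n"
  shows "Lambda n a J = (\<Sum>m<n. if m \<notin> J \<and> m+n \<notin> J
            then pair_sign n m J * a (insert m (insert (m+n) J)) else 0)"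
  unfolding Lambda_eq_interior sum_negf[symmetric]
proof (rule sum.cong[OF refl])
  fix m
  have "insert (m+n) (insert m J) = insert m (insert (m+n) J)" by auto
  with assms show "- interior m (interior (m+n) a) J = (if m \<notin> J \<and> m+n \<notin> J
            then pair_sign n m J * a (insert m (insert (m+n) J)) else 0)"
    by (auto simp: interior_eq insert_sign_insert pair_sign_def)
qed

section \<open>The relation \<open>[\<Lambda>, L] = n - deg\<close> and primitive decompositions\<close>

lemma eps_pair:
  assumes "m \<noteq> p"
  shows "eps {m, p} J = insert_sign m J * insert_sign p J"
proof -
  have "{(a,q). a \<in> {m,p} \<and> q \<in> J \<and> q < a} = Pair m ` {q\<in>J. q < m} \<union> Pair p ` {q\<in>J. q < p}"
    by auto
  moreover have "card (Pair m ` {q\<in>J. q < m} \<union> Pair p ` {q\<in>J. q < p})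
      = card {q\<in>J. q < m} + card {q\<in>J. q < p}"
    using assms by (subst card_Un_disjoint) (auto simp: card_image inj_on_def)
  ultimately show ?thesis by (simp add: eps_def insert_sign_def power_add)
qed

lemma Lop_eq_pair_sum:
  assumes "0 < n" and "finite K"
  shows "Lop n a K = (\<Sum>m<n. if m \<in> K \<and> m+n \<in> K
            then pair_sign n m (K - {m, m+n}) * a (K - {m, m+n}) else 0)"
proof -
  define M where "M = {m\<in>{..<n}. m \<in> K \<and> m+n \<in> K}"
  have "Lop n a K = (\<Sum>I\<in>Pow K. eps I (K - I) * omega n I * a (K - I))"
    by (simp add: Lop_def wedge_def)
  also have "\<dots> = (\<Sum>I\<in>(\<lambda>m. {m, m+n}) ` M. eps I (K - I) * a (K - I))"
  proof (rule sum.mono_neutral_cong_right)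
    show "\<forall>I\<in>Pow K - (\<lambda>m. {m, m+n}) ` M. eps I (K - I) * omega n I * a (K - I) = 0"
      by (auto simp: omega_def M_def)
  qed (use assms in \<open>auto simp: M_def omega_def\<close>)
  also have "\<dots> = (\<Sum>m\<in>M. eps {m, m+n} (K - {m, m+n}) * a (K - {m, m+n}))"
    by (rule sum.reindex_cong[OF _ refl refl]) (auto simp: inj_on_def M_def doubleton_eq_iff)
  also have "\<dots> = (\<Sum>m<n. if m \<in> K \<and> m+n \<in> K
            then pair_sign n m (K - {m, m+n}) * a (K - {m, m+n}) else 0)"
    using assms(1) unfolding M_def sum.inter_filter[OF finite_lessThan, symmetric]
    by (intro sum.cong) (auto simp: eps_pair pair_sign_def)
  finally show ?thesis .
qed

lemma card_free_pairs:
  assumes "J \<subseteq> {..<2*n}"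
  shows "card {m. m<n \<and> m\<notin>J \<and> m+n\<notin>J} + card J = n + card {m. m<n \<and> m\<in>J \<and> m+n\<in>J}"
proof -
  define X where "X = {m. m<n \<and> m\<in>J}"
  define Y where "Y = {m. m<n \<and> m+n\<in>J}"
  have fin: "finite X" "finite Y" and XY: "X \<union> Y \<subseteq> {..<n}" by (auto simp: X_def Y_def)
  have "J = X \<union> (\<lambda>m. m+n) ` Y"
  proof (intro equalityI subsetI)
    fix i assume "i \<in> J"
    moreover have "i < n \<or> (i - n < n \<and> i = (i - n) + n)" using assms \<open>i \<in> J\<close> by auto
    ultimately show "i \<in> X \<union> (\<lambda>m. m+n) ` Y" by (auto simp: X_def Y_def)
  qed (auto simp: X_def Y_def)
  moreover have "X \<inter> (\<lambda>m. m+n) ` Y = {}" by (auto simp: X_def Y_def)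
  ultimately have "card J = card X + card Y"
    by (simp add: card_Un_disjoint card_image fin)
  moreover have "card (X \<union> Y) + card (X \<inter> Y) = card X + card Y"
    using card_Un_Int[OF fin] by simp
  moreover have "{m. m<n \<and> m\<notin>J \<and> m+n\<notin>J} = {..<n} - (X \<union> Y)"
    and "{m. m<n \<and> m\<in>J \<and> m+n\<in>J} = X \<inter> Y" by (auto simp: X_def Y_def)
  moreover have "card ({..<n} - (X \<union> Y)) + card (X \<union> Y) = n"
    using XY card_mono[OF finite_lessThan XY] by (simp add: card_Diff_subset fin)
  ultimately show ?thesis by simp
qed

lemma pair_sign_swap:
  assumes "0 < n" "m < n" "m' < n" "m \<noteq> m'"
    and "m \<notin> J" "m+n \<notin> J" "m' \<notin> J" "m'+n \<notin> J"
  shows "pair_sign n m (insert m' (insert (m'+n) J)) * pair_sign n m' (insert m (insert (m+n) J))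
       = pair_sign n m' J * pair_sign n m J"
  using assms by (cases "m < m'") (auto simp: pair_sign_def insert_sign_insert)

lemma sum_lessThan_split_off:
  fixes f :: "nat \<Rightarrow> 'a::comm_monoid_add"
  assumes "m < n"
  shows "(\<Sum>i<n. f i) = f m + (\<Sum>i<n. if i = m then 0 else f i)"
  using assms by (simp add: sum.delta_remove sum.remove[of _ m])

lemma Lop_insert_pair:
  assumes n: "0 < n" and J: "finite J" and m: "m < n" "m \<notin> J" "m+n \<notin> J"
  shows "pair_sign n m J * Lop n a (insert m (insert (m+n) J)) = a J +
    (\<Sum>m'<n. if m' \<noteq> m \<and> m' \<in> J \<and> m'+n \<in> J
       then pair_sign n m' (J - {m', m'+n}) * pair_sign n m (J - {m', m'+n})
            * a (insert m (insert (m+n) (J - {m', m'+n}))) else 0)"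
proof -
  define Jp where "Jp = insert m (insert (m+n) J)"
  define f where "f m' = (if m' \<in> Jp \<and> m'+n \<in> Jp
      then pair_sign n m' (Jp - {m', m'+n}) * a (Jp - {m', m'+n}) else 0)" for m'
  have "Jp - {m, m+n} = J" using m by (auto simp: Jp_def)
  then have fm: "f m = pair_sign n m J * a J" by (simp add: f_def Jp_def)
  have fm': "pair_sign n m J * f m' = (if m' \<in> J \<and> m'+n \<in> J
       then pair_sign n m' (J - {m', m'+n}) * pair_sign n m (J - {m', m'+n})
            * a (insert m (insert (m+n) (J - {m', m'+n}))) else 0)"
    if m': "m' < n" "m' \<noteq> m" for m'
  proof (cases "m' \<in> J \<and> m'+n \<in> J")
    case False
    then show ?thesis using m m' by (auto simp: f_def Jp_def)
  next
    case True
    define J0 where "J0 = J - {m', m'+n}"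
    have J0: "J = insert m' (insert (m'+n) J0)" "Jp - {m', m'+n} = insert m (insert (m+n) J0)"
      using True m m' by (auto simp: J0_def Jp_def)
    have "pair_sign n m J * pair_sign n m' (Jp - {m', m'+n}) = pair_sign n m' J0 * pair_sign n m J0"
      unfolding J0 by (rule pair_sign_swap) (use n m m' in \<open>auto simp: J0_def\<close>)
    then show ?thesis using True m m' by (simp add: f_def Jp_def J0(2)[unfolded Jp_def] J0_def[symmetric])
  qed
  have "Lop n a Jp = (\<Sum>m'<n. f m')"
    unfolding f_def by (rule Lop_eq_pair_sum) (use n J in \<open>auto simp: Jp_def\<close>)
  also have "\<dots> = f m + (\<Sum>m'<n. if m' = m then 0 else f m')"
    by (rule sum_lessThan_split_off[OF m(1)])
  finally have "pair_sign n m J * Lop n a Jp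
      = pair_sign n m J * f m + (\<Sum>m'<n. if m' = m then 0 else pair_sign n m J * f m')"
    by (simp add: sum_distrib_left distrib_left if_distrib cong: if_cong)
  also have "\<dots> = a J + (\<Sum>m'<n. if m' \<noteq> m \<and> m' \<in> J \<and> m'+n \<in> J
       then pair_sign n m' (J - {m', m'+n}) * pair_sign n m (J - {m', m'+n})
            * a (insert m (insert (m+n) (J - {m', m'+n}))) else 0)"
    using fm fm' by (intro arg_cong2[where f="(+)"] sum.cong) (auto simp: mult.assoc[symmetric])
  finally show ?thesis by (simp add: Jp_def)
qed

lemma Lambda_remove_pair:
  assumes n: "0 < n" and m': "m' < n" "m' \<in> J" "m'+n \<in> J"
  shows "pair_sign n m' (J - {m', m'+n}) * Lambda n a (J - {m', m'+n}) = a J +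
    (\<Sum>m<n. if m \<noteq> m' \<and> m \<notin> J \<and> m+n \<notin> J
       then pair_sign n m' (J - {m', m'+n}) * pair_sign n m (J - {m', m'+n})
            * a (insert m (insert (m+n) (J - {m', m'+n}))) else 0)"
proof -
  define J0 where "J0 = J - {m', m'+n}"
  define f where "f m = (if m \<notin> J0 \<and> m+n \<notin> J0
      then pair_sign n m J0 * a (insert m (insert (m+n) J0)) else 0)" for m
  have "insert m' (insert (m'+n) J0) = J" using m' by (auto simp: J0_def)
  then have fm': "f m' = pair_sign n m' J0 * a J" by (simp add: f_def J0_def)
  have fm: "pair_sign n m' J0 * f m = (if m \<notin> J \<and> m+n \<notin> J
       then pair_sign n m' J0 * pair_sign n m J0 * a (insert m (insert (m+n) J0)) else 0)"
    if "m < n" "m \<noteq> m'" for m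
  proof -
    have "m \<notin> J0 \<and> m+n \<notin> J0 \<longleftrightarrow> m \<notin> J \<and> m+n \<notin> J" using that m' by (auto simp: J0_def)
    then show ?thesis by (simp add: f_def mult.assoc)
  qed
  have "Lambda n a J0 = f m' + (\<Sum>m<n. if m = m' then 0 else f m)"
    unfolding f_def Lambda_eq_pair_sum[OF n] by (rule sum_lessThan_split_off[OF m'(1)])
  then have "pair_sign n m' J0 * Lambda n a J0
      = pair_sign n m' J0 * f m' + (\<Sum>m<n. if m = m' then 0 else pair_sign n m' J0 * f m)"
    by (simp add: sum_distrib_left distrib_left if_distrib cong: if_cong)
  also have "\<dots> = a J + (\<Sum>m<n. if m \<noteq> m' \<and> m \<notin> J \<and> m+n \<notin> J
       then pair_sign n m' J0 * pair_sign n m J0 * a (insert m (insert (m+n) J0)) else 0)"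
    using fm fm' by (intro arg_cong2[where f="(+)"] sum.cong) (auto simp: mult.assoc[symmetric])
  finally show ?thesis unfolding J0_def .
qed

text \<open>Coefficientwise, the terms of \<open>\<Lambda>(L a)\<close> and \<open>L(\<Lambda> a)\<close> that add and remove two different
  pairs \<open>{m, m + n}\<close> cancel; what survives counts the pairs disjoint from \<open>J\<close> minus those inside \<open>J\<close>.\<close>
lemma Lambda_Lop_commutator:
  assumes n: "0 < n" and J: "finite J" "J \<subseteq> {..<2*n}"
  shows "Lambda n (Lop n a) J = Lop n (Lambda n a) J + (real n - real (card J)) * a J"
proof -
  define free where "free m \<longleftrightarrow> m \<notin> J \<and> m+n \<notin> J" for m
  define full where "full m \<longleftrightarrow> m \<in> J \<and> m+n \<in> J" for m
  define T where "T m m' = pair_sign n m' (J - {m', m'+n}) * pair_sign n m (J - {m', m'+n})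
      * a (insert m (insert (m+n) (J - {m', m'+n})))" for m m'
  define cross where "cross m m' = (if free m \<and> full m' \<and> m \<noteq> m' then T m m' else 0)" for m m'
  have count: "(\<Sum>m<n. if R m then a J else 0) = real (card {m. m<n \<and> R m}) * a J" for R
    by (simp add: sum.If_cases Int_def)
  have "Lambda n (Lop n a) J = (\<Sum>m<n. (if free m then a J else 0) + (\<Sum>m'<n. cross m m'))"
    unfolding Lambda_eq_pair_sum[OF n]
  proof (intro sum.cong refl)
    fix m assume "m \<in> {..<n}"
    then show "(if m \<notin> J \<and> m+n \<notin> J then pair_sign n m J * Lop n a (insert m (insert (m+n) J)) else 0)
        = (if free m then a J else 0) + (\<Sum>m'<n. cross m m')"
      using Lop_insert_pair[OF n J(1)] by (auto simp: cross_def free_def full_def T_def intro!: sum.cong)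
  qed
  also have "\<dots> = real (card {m. m<n \<and> free m}) * a J + (\<Sum>m'<n. \<Sum>m<n. cross m m')"
    unfolding sum.distrib count by (simp add: sum.swap[of cross])
  finally have LL: "Lambda n (Lop n a) J = \<dots>" .
  have "Lop n (Lambda n a) J = (\<Sum>m'<n. (if full m' then a J else 0) + (\<Sum>m<n. cross m m'))"
    unfolding Lop_eq_pair_sum[OF n J(1)]
  proof (intro sum.cong refl)
    fix m' assume "m' \<in> {..<n}"
    then show "(if m' \<in> J \<and> m'+n \<in> J then pair_sign n m' (J - {m', m'+n}) * Lambda n a (J - {m', m'+n}) else 0)
        = (if full m' then a J else 0) + (\<Sum>m<n. cross m m')"
      using Lambda_remove_pair[OF n] by (auto simp: cross_def free_def full_def T_def intro!: sum.cong)
  qed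
  also have "\<dots> = real (card {m. m<n \<and> full m}) * a J + (\<Sum>m'<n. \<Sum>m<n. cross m m')"
    by (simp add: sum.distrib count)
  finally have LLa: "Lop n (Lambda n a) J = \<dots>" .
  have "real (card {m. m<n \<and> free m}) = real (card {m. m<n \<and> full m}) + (real n - real (card J))"
    using card_free_pairs[OF J(2)] unfolding free_def full_def by linarith
  then show ?thesis unfolding LL LLa by (simp add: distrib_right)
qed

lemma alg_form_support:
  "is_alg_form n d a \<Longrightarrow> a I \<noteq> 0 \<Longrightarrow> finite I \<and> I \<subseteq> {..<2*n} \<and> card I = d"
  unfolding is_alg_form_def by (meson finite_lessThan finite_subset)

lemma Lop_zero_form [simp]: "Lop n zero_form = zero_form"
  by (simp add: Lop_def wedge_def fun_eq_iff)

lemma primitive_eq_zero_if_Lop_primitive: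
  assumes c: "is_alg_form n d c" and "d < n"
    and "Lambda n c = zero_form" and "Lambda n (Lop n c) = zero_form"
  shows "c = zero_form"
proof (rule ext, rule ccontr)
  fix J assume "c J \<noteq> zero_form J"
  then have J: "finite J" "J \<subseteq> {..<2*n}" "card J = d" and "c J \<noteq> 0"
    using alg_form_support[OF c] by auto
  moreover have "0 = (real n - real d) * c J"
    using Lambda_Lop_commutator[OF _ J(1,2), of c] assms by (simp add: J(3))
  ultimately show False using \<open>d < n\<close> by simp
qed

lemma partial_minus_eq_zero_if_d_primitive:
  assumes "s \<le> n" and dB: "is_alg_form n (s+1) (ext_d n B x)" "Lambda n (ext_d n B x) = zero_form"
  shows "partial_minus n s B x = zero_form"
proof (cases "s = 0")
  case False
  have "(THE c. is_alg_form n (s - 1) c \<and> Lambda n c = zero_form \<and>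
        (\<exists>a. is_alg_form n (s + 1) a \<and> Lambda n a = zero_form \<and>
             ext_d n B x = (\<lambda>K. a K + Lop n c K))) = zero_form"
  proof (rule the_equality)
    fix c assume "is_alg_form n (s - 1) c \<and> Lambda n c = zero_form \<and>
        (\<exists>a. is_alg_form n (s + 1) a \<and> Lambda n a = zero_form \<and>
             ext_d n B x = (\<lambda>K. a K + Lop n c K))"
    then obtain a where c: "is_alg_form n (s - 1) c" "Lambda n c = zero_form"
      and a: "Lambda n a = zero_form" and decomp: "ext_d n B x = (\<lambda>K. a K + Lop n c K)"
      by blast
    have "Lop n c = (\<lambda>K. ext_d n B x K - a K)" by (simp add: decomp)
    then have "Lambda n (Lop n c) = Lambda n (\<lambda>K. ext_d n B x K - a K)" by simp
    also have "\<dots> = zero_form" using dB(2) a by (simp add: fun_eq_iff Lambda_linear)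
    finally have "Lambda n (Lop n c) = zero_form" .
    then show "c = zero_form"
      using primitive_eq_zero_if_Lop_primitive[OF c(1) _ c(2)] False \<open>s \<le> n\<close> by simp
  qed (use dB in \<open>auto simp: is_alg_form_def fun_eq_iff Lambda_linear\<close>)
  then show ?thesis using False by (simp add: partial_minus_def)
qed (simp add: partial_minus_def)

section \<open>The unit disk and partial derivatives\<close>

lemma unit_disk_iff: "x \<in> unit_disk n \<longleftrightarrow> (\<forall>i\<ge>2*n. x i = 0) \<and> L2_set x {..<2*n} < 1"
  by (simp add: unit_disk_def L2_set_def)

lemma unit_disk_scale:
  assumes x: "x \<in> unit_disk n" and t: "0 \<le> t" "t \<le> 1"
  shows "(\<lambda>i. t * x i) \<in> unit_disk n"
proof -
  have "(\<Sum>i<2*n. (t * x i)^2) = t^2 * (\<Sum>i<2*n. (x i)^2)"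
    by (simp add: power_mult_distrib sum_distrib_left)
  also have "\<dots> \<le> 1 * (\<Sum>i<2*n. (x i)^2)"
    using t by (intro mult_right_mono) (auto simp: power_le_one sum_nonneg)
  finally show ?thesis using x by (auto simp: unit_disk_def)
qed

text \<open>Points are functions \<open>nat \<Rightarrow> real\<close> with the product topology, in which the disk is not open;
  this explicit neighbourhood replaces openness.\<close>
lemma unit_disk_neighbourhood:
  assumes y: "y \<in> unit_disk n"
  obtains d where "d > 0" "\<And>w h. \<bar>h\<bar> < d \<Longrightarrow> (\<forall>i\<ge>2*n. w i = 0) \<Longrightarrow>
      (\<forall>i<2*n. \<bar>w i\<bar> \<le> \<bar>h\<bar> * \<bar>v i\<bar>) \<Longrightarrow> (\<lambda>i. y i + w i) \<in> unit_disk n"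
proof -
  define S where "S = (\<Sum>i<2*n. \<bar>v i\<bar>)"
  define d where "d = (1 - L2_set y {..<2*n}) / (S + 1)"
  have S0: "S \<ge> 0" by (simp add: S_def sum_nonneg)
  have ly: "L2_set y {..<2*n} < 1" using y by (simp add: unit_disk_iff)
  show ?thesis
  proof (rule that)
    show "d > 0" using ly S0 by (simp add: d_def)
    fix w and h :: real
    assume h: "\<bar>h\<bar> < d" and w0: "\<forall>i\<ge>2*n. w i = 0" and wb: "\<forall>i<2*n. \<bar>w i\<bar> \<le> \<bar>h\<bar> * \<bar>v i\<bar>"
    have "L2_set (\<lambda>i. y i + w i) {..<2*n} \<le> L2_set y {..<2*n} + L2_set w {..<2*n}"
      by (rule L2_set_triangle_ineq)
    also have "L2_set w {..<2*n} \<le> (\<Sum>i<2*n. \<bar>w i\<bar>)" by (rule L2_set_le_sum_abs)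
    also have "\<dots> \<le> \<bar>h\<bar> * S" using wb unfolding S_def sum_distrib_left by (intro sum_mono) auto
    also have "\<dots> \<le> \<bar>h\<bar> * (S + 1)" by (simp add: mult_left_mono)
    also have "\<dots> < d * (S + 1)" using h S0 by (intro mult_strict_right_mono) auto
    also have "\<dots> = 1 - L2_set y {..<2*n}" using S0 by (simp add: d_def)
    finally show "(\<lambda>i. y i + w i) \<in> unit_disk n" using y w0 by (auto simp: unit_disk_iff)
  qed
qed

lemma unit_disk_line:
  assumes x: "x \<in> unit_disk n" and j: "j < 2*n"
  obtains d where "d > 0" "\<And>s. \<bar>s\<bar> < d \<Longrightarrow> x(j := x j + s) \<in> unit_disk n"
proof -
  obtain d where d: "d > 0" "\<And>w h. \<bar>h\<bar> < d \<Longrightarrow> (\<forall>i\<ge>2*n. w i = 0) \<Longrightarrow>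
      (\<forall>i<2*n. \<bar>w i\<bar> \<le> \<bar>h\<bar> * \<bar>if i = j then 1 else 0\<bar>) \<Longrightarrow> (\<lambda>i. x i + w i) \<in> unit_disk n"
    using unit_disk_neighbourhood[OF x, of "\<lambda>i. if i = j then 1 else 0"] by blast
  have "x(j := x j + s) \<in> unit_disk n" if "\<bar>s\<bar> < d" for s
  proof -
    have "(\<lambda>i. x i + (if i = j then s else 0)) \<in> unit_disk n"
      by (rule d(2)[OF that]) (use j in auto)
    moreover have "(\<lambda>i. x i + (if i = j then s else 0)) = x(j := x j + s)" by auto
    ultimately show ?thesis by simp
  qed
  with d(1) show ?thesis by (rule that)
qed

lemma eventually_unit_disk_line:
  assumes "x \<in> unit_disk n" and "j < 2*n"
  shows "\<forall>\<^sub>F s in nhds 0. x(j := x j + s) \<in> unit_disk n"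
proof -
  obtain d where "d > 0" "\<And>s. \<bar>s\<bar> < d \<Longrightarrow> x(j := x j + s) \<in> unit_disk n"
    using unit_disk_line[OF assms] by blast
  then show ?thesis unfolding eventually_nhds_metric by (auto simp: dist_real_def)
qed

lemma iter_pd_Nil [simp]: "iter_pd [] f = f"
  by (simp add: iter_pd_def)

lemma iter_pd_Cons: "iter_pd (j#js) f = iter_pd js (pd j f)"
  by (simp add: iter_pd_def)

lemma iter_pd_snoc: "iter_pd (js@[j]) f = pd j (iter_pd js f)"
  by (simp add: iter_pd_def)

lemma smooth_on_continuous: "smooth_on n U f \<Longrightarrow> continuous_on U f"
  unfolding smooth_on_def by (drule spec[of _ "[]"]) simp

lemma smooth_on_has_pd:
  assumes "smooth_on n U f" "z \<in> U" "j < 2*n"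
  shows "((\<lambda>t. f (z(j := z j + t))) has_real_derivative pd j f z) (at 0)"
proof -
  have "(\<lambda>t. f (z(j := z j + t))) differentiable (at 0)"
    using assms unfolding smooth_on_def by (drule_tac spec[of _ "[]"]) simp
  then show ?thesis unfolding pd_def by (simp add: DERIV_deriv_iff_real_differentiable)
qed

lemma smooth_on_pd:
  assumes "smooth_on n U f" "j < 2*n"
  shows "smooth_on n U (pd j f)"
  unfolding smooth_on_def
proof (intro allI impI)
  fix js assume "set js \<subseteq> {..<2*n}"
  then have "set (j#js) \<subseteq> {..<2*n}" using assms(2) by auto
  with assms(1) show "continuous_on U (iter_pd js (pd j f)) \<and>
      (\<forall>i<2*n. \<forall>x\<in>U. (\<lambda>t. iter_pd js (pd j f) (x(i := x i + t))) differentiable at 0)"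
    unfolding smooth_on_def iter_pd_Cons[symmetric] by blast
qed

lemma continuous_on_pd: "smooth_on n U f \<Longrightarrow> j < 2*n \<Longrightarrow> continuous_on U (pd j f)"
  by (rule smooth_on_continuous, rule smooth_on_pd)

lemma pd_eqI: "((\<lambda>s. f (x(j := x j + s))) has_real_derivative D) (at 0) \<Longrightarrow> pd j f x = D"
  unfolding pd_def by (rule DERIV_imp_deriv)

lemma pd_cong_unit_disk:
  assumes "\<forall>y\<in>unit_disk n. f y = g y" and "x \<in> unit_disk n" and "j < 2*n"
  shows "pd j f x = pd j g x"
proof -
  have "\<forall>\<^sub>F s in nhds 0. f (x(j := x j + s)) = g (x(j := x j + s))"
    using eventually_unit_disk_line[OF assms(2,3)] by eventually_elim (use assms(1) in auto)
  then show ?thesis unfolding pd_def by (rule deriv_cong_ev) simp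
qed

lemma pd_const [simp]: "pd j (\<lambda>y. c) = (\<lambda>x. 0)"
  by (simp add: pd_def fun_eq_iff)

lemma ext_d_eq:
  "ext_d n B x K = (if K \<subseteq> {..<2*n}
     then (\<Sum>j\<in>K. insert_sign j (K - {j}) * pd j (\<lambda>y. B y (K - {j})) x) else 0)"
  by (simp add: ext_d_def insert_sign_def)

lemma insert_sign_exchange:
  assumes "i \<notin> K" "j \<in> K"
  shows "insert_sign j (K - {j}) * insert_sign i (K - {j}) = - (insert_sign i K * insert_sign j (insert i (K - {j})))"
proof -
  have "K = insert j (K - {j})" using assms by auto
  then have "insert_sign i K = (if j < i then - insert_sign i (K - {j}) else insert_sign i (K - {j}))"
    by (metis insert_sign_insert Diff_insert_absorb Diff_iff insertI1)
  moreover have "insert_sign j (insert i (K - {j}))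
      = (if i < j then - insert_sign j (K - {j}) else insert_sign j (K - {j}))"
    using assms by (intro insert_sign_insert) auto
  moreover have "i \<noteq> j" using assms by auto
  ultimately show ?thesis by (cases "i < j") auto
qed

text \<open>Cartan's formula \<open>d \<circ> \<iota>\<^sub>i + \<iota>\<^sub>i \<circ> d = \<partial>\<^sub>i\<close> for the coordinate field \<open>e\<^sub>i\<close>, read off at
  the coefficient of \<open>dx\<^sup>K\<close> of a form whose differential vanishes there.\<close>
lemma d_interior_closed_coeff:
  assumes closed: "ext_d n B y (insert i K) = 0" and K: "K \<subseteq> {..<2*n}" and i: "i < 2*n"
  shows "(\<Sum>j\<in>K. if i \<in> K - {j} then 0 else insert_sign j (K - {j}) * insert_sign i (K - {j})
           * pd j (\<lambda>z. B z (insert i (K - {j}))) y) = pd i (\<lambda>z. B z K) y"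
proof -
  have fin: "finite K" using K finite_subset by blast
  show ?thesis
  proof (cases "i \<in> K")
    case True
    then have "insert i (K - {i}) = K" by auto
    then have "(\<Sum>j\<in>K. if i \<in> K - {j} then 0 else insert_sign j (K - {j}) * insert_sign i (K - {j})
        * pd j (\<lambda>z. B z (insert i (K - {j}))) y) = (\<Sum>j\<in>K. if j = i then pd i (\<lambda>z. B z K) y else 0)"
      using True by (intro sum.cong) auto
    with True fin show ?thesis by simp
  next
    case False
    have "0 = (\<Sum>j\<in>insert i K. insert_sign j (insert i K - {j}) * pd j (\<lambda>z. B z (insert i K - {j})) y)"
      using closed K i by (simp add: ext_d_eq)
    also have "\<dots> = insert_sign i K * pd i (\<lambda>z. B z K) y
        + (\<Sum>j\<in>K. insert_sign j (insert i (K - {j})) * pd j (\<lambda>z. B z (insert i (K - {j}))) y)"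
    proof -
      have "insert i K - {j} = insert i (K - {j})" if "j \<in> K" for j using that False by auto
      then show ?thesis using fin False by (simp cong: sum.cong)
    qed
    finally have "(\<Sum>j\<in>K. insert_sign j (insert i (K - {j})) * pd j (\<lambda>z. B z (insert i (K - {j}))) y)
        = - (insert_sign i K * pd i (\<lambda>z. B z K) y)" by linarith
    then have "(\<Sum>j\<in>K. - insert_sign i K * (insert_sign j (insert i (K - {j}))
        * pd j (\<lambda>z. B z (insert i (K - {j}))) y)) = (insert_sign i K * insert_sign i K) * pd i (\<lambda>z. B z K) y"
      by (simp only: sum_distrib_left[symmetric])
    then show ?thesis
      using False by (simp add: insert_sign_exchange mult.assoc cong: sum.cong)
  qed
qed

section \<open>Radial integrals\<close>

lemma continuous_on_scale_point: "continuous_on S (\<lambda>p :: point \<times> real. (\<lambda>i. snd p * fst p i))"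
proof (rule continuous_on_coordinatewise_then_product)
  fix i
  have "continuous_on S (\<lambda>p :: point \<times> real. fst p i)"
    by (rule continuous_on_product_then_coordinatewise[OF continuous_on_fst[OF continuous_on_id]])
  then show "continuous_on S (\<lambda>p. snd p * fst p i)" by (intro continuous_intros)
qed

definition radial_integral :: "nat \<Rightarrow> (point \<Rightarrow> real) \<Rightarrow> point \<Rightarrow> real" where
  "radial_integral m h x = integral {0..1} (\<lambda>t. t^m * h (\<lambda>i. t * x i))"

lemma continuous_on_radial_integral:
  assumes "continuous_on (unit_disk n) h"
  shows "continuous_on (unit_disk n) (radial_integral m h)"
proof -
  have "continuous_on (unit_disk n \<times> cbox 0 1) (\<lambda>p. h (\<lambda>i. snd p * fst p i))"
    by (rule continuous_on_compose2[OF assms continuous_on_scale_point]) (auto intro: unit_disk_scale)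
  then have "continuous_on (unit_disk n \<times> cbox 0 1) (\<lambda>(x, t). t^m * h (\<lambda>i. t * x i))"
    unfolding split_beta by (intro continuous_intros)
  from integral_continuous_on_param[OF this] show ?thesis
    unfolding radial_integral_def by simp
qed

lemma radial_integrand_integrable:
  assumes "continuous_on (unit_disk n) h" and "x \<in> unit_disk n"
  shows "(\<lambda>t. t^m * h (\<lambda>i. t * x i)) integrable_on {0..1}"
proof -
  have "continuous_on {0..1} (\<lambda>t. (\<lambda>i. t * x i))"
    by (rule continuous_on_coordinatewise_then_product) (intro continuous_intros)
  then have "continuous_on {0..1} (\<lambda>t. h (\<lambda>i. t * x i))"
    by (rule continuous_on_compose2[OF assms(1)]) (auto intro: unit_disk_scale[OF assms(2)])
  then show ?thesis by (intro integrable_continuous_real continuous_intros)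
qed

lemma radial_integral_cmult: "radial_integral m (\<lambda>y. c * h y) x = c * radial_integral m h x"
proof -
  have "(\<lambda>t. t^m * (c * h (\<lambda>i. t * x i))) = (\<lambda>t. c * (t^m * h (\<lambda>i. t * x i)))"
    by (simp add: mult_ac)
  then show ?thesis by (simp add: radial_integral_def)
qed

lemma radial_integral_zero [simp]: "radial_integral m (\<lambda>y. 0) x = 0"
  by (simp add: radial_integral_def)

lemma radial_integral_cong:
  assumes "\<forall>y\<in>unit_disk n. h y = h' y" and "x \<in> unit_disk n"
  shows "radial_integral m h x = radial_integral m h' x"
  unfolding radial_integral_def by (rule integral_cong) (use assms unit_disk_scale in auto)

lemma radial_integral_sum:
  assumes "x \<in> unit_disk n" and "finite A" and "\<And>a. a \<in> A \<Longrightarrow> continuous_on (unit_disk n) (h a)"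
  shows "radial_integral m (\<lambda>y. \<Sum>a\<in>A. h a y) x = (\<Sum>a\<in>A. radial_integral m (h a) x)"
  unfolding radial_integral_def sum_distrib_left
  by (rule integral_sum[OF assms(2)]) (rule radial_integrand_integrable[OF assms(3,1)])

lemma has_real_derivative_scaled_line:
  assumes h: "smooth_on n (unit_disk n) h" and j: "j < 2*n"
    and z: "(\<lambda>i. t * (x(j := x j + s)) i) \<in> unit_disk n"
  shows "((\<lambda>s. h (\<lambda>i. t * (x(j := x j + s)) i)) has_real_derivative
      t * pd j h (\<lambda>i. t * (x(j := x j + s)) i)) (at s)"
proof -
  define z where "z = (\<lambda>i. t * (x(j := x j + s)) i)"
  have "z \<in> unit_disk n" using z by (simp only: z_def)
  from smooth_on_has_pd[OF h this j]
  have D0: "((\<lambda>u. h (z(j := z j + u))) has_real_derivative pd j h z) (at (t * (s - s)))" by simp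
  have D1: "((\<lambda>s'. t * (s' - s)) has_real_derivative t) (at s)"
    by (auto intro!: derivative_eq_intros)
  have "((\<lambda>s'. h (z(j := z j + t * (s' - s)))) has_real_derivative pd j h z * t) (at s)"
    by (rule DERIV_chain2[OF D0 D1])
  moreover have "z(j := z j + t * (s' - s)) = (\<lambda>i. t * (x(j := x j + s')) i)" for s'
    by (auto simp: z_def algebra_simps)
  ultimately show ?thesis by (simp add: z_def mult.commute)
qed

lemma has_pd_radial_integral:
  assumes h: "smooth_on n (unit_disk n) h" and x: "x \<in> unit_disk n" and j: "j < 2*n"
  shows "((\<lambda>s. radial_integral m h (x(j := x j + s))) has_real_derivative
      radial_integral (Suc m) (pd j h) x) (at 0)"
proof -
  obtain d where d: "d > 0" "\<And>s. \<bar>s\<bar> < d \<Longrightarrow> x(j := x j + s) \<in> unit_disk n"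
    using unit_disk_line[OF x j] by blast
  define S where "S = ball (0::real) d"
  have inU: "(\<lambda>i. t * (x(j := x j + s)) i) \<in> unit_disk n" if "s \<in> S" "t \<in> {0..1}" for s t
    by (rule unit_disk_scale[OF d(2)]) (use that in \<open>auto simp: S_def dist_real_def\<close>)
  define f where "f s t = t^m * h (\<lambda>i. t * (x(j := x j + s)) i)" for s t :: real
  define f' where "f' s t = t^Suc m * pd j h (\<lambda>i. t * (x(j := x j + s)) i)" for s t :: real
  have line: "continuous_on A (\<lambda>p. \<lambda>i. snd p * (x(j := x j + fst p)) i)" for A :: "(real \<times> real) set"
  proof (rule continuous_on_coordinatewise_then_product)
    fix i show "continuous_on A (\<lambda>p. snd p * (x(j := x j + fst p)) i)"
      by (cases "i = j") (simp_all add: continuous_intros)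
  qed
  have "((\<lambda>s. f s t) has_field_derivative f' s t) (at s within S)"
    if "s \<in> S" "t \<in> cbox 0 1" for s t
    using DERIV_cmult[OF has_real_derivative_scaled_line[OF h j inU[OF that[unfolded cbox_interval]]], of "t^m"]
    by (auto simp: f_def f'_def mult_ac intro: has_field_derivative_at_within)
  moreover have "f s integrable_on cbox 0 1" if "s \<in> S" for s
  proof -
    have "continuous_on {0..1} (\<lambda>t. \<lambda>i. t * (x(j := x j + s)) i)"
      by (rule continuous_on_coordinatewise_then_product) (simp add: continuous_intros)
    then have "continuous_on {0..1} (\<lambda>t. h (\<lambda>i. t * (x(j := x j + s)) i))"
      by (rule continuous_on_compose2[OF smooth_on_continuous[OF h]]) (use inU that in auto)
    then show ?thesis unfolding f_def cbox_interval by (intro integrable_continuous_real continuous_intros)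
  qed
  moreover have "continuous_on (S \<times> cbox 0 1) (\<lambda>(s, t). f' s t)"
  proof -
    have "continuous_on (S \<times> cbox 0 1) (\<lambda>p. pd j h (\<lambda>i. snd p * (x(j := x j + fst p)) i))"
      by (rule continuous_on_compose2[OF continuous_on_pd[OF h j] line])
        (auto simp: cbox_interval simp del: fun_upd_apply intro!: inU)
    then show ?thesis unfolding f'_def split_beta by (intro continuous_intros)
  qed
  ultimately have "((\<lambda>s. integral (cbox 0 1) (f s)) has_field_derivative integral (cbox 0 1) (f' 0)) (at 0 within S)"
    by (intro leibniz_rule_field_derivative) (auto simp: S_def d)
  moreover have "at (0::real) within S = at 0"
    by (rule at_within_open) (auto simp: S_def d)
  ultimately show ?thesis
    by (simp add: radial_integral_def cbox_interval f_def[abs_def] f'_def[abs_def] del: fun_upd_apply)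
qed

text \<open>The coefficients of the homotopy operator lie in this class, which is closed under coordinate
  partial derivatives; this gives their smoothness while differentiating under the integral sign
  only once at a time.\<close>
inductive radial_fun :: "nat \<Rightarrow> (point \<Rightarrow> real) \<Rightarrow> bool" for n where
  radial_fun_integral: "smooth_on n (unit_disk n) h \<Longrightarrow> radial_fun n (radial_integral m h)"
| radial_fun_coord_mult: "radial_fun n F \<Longrightarrow> radial_fun n (\<lambda>x. x i * F x)"
| radial_fun_add: "radial_fun n F \<Longrightarrow> radial_fun n G \<Longrightarrow> radial_fun n (\<lambda>x. F x + G x)"
| radial_fun_cmult: "radial_fun n F \<Longrightarrow> radial_fun n (\<lambda>x. c * F x)"
| radial_fun_zero: "radial_fun n (\<lambda>x. 0)"

lemma radial_fun_sum:
  "finite A \<Longrightarrow> (\<And>a. a \<in> A \<Longrightarrow> radial_fun n (F a)) \<Longrightarrow> radial_fun n (\<lambda>x. \<Sum>a\<in>A. F a x)"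
  by (induction A rule: finite_induct) (auto intro: radial_fun.intros)

lemma radial_fun_continuous: "radial_fun n F \<Longrightarrow> continuous_on (unit_disk n) F"
proof (induction rule: radial_fun.induct)
  case (radial_fun_integral h m)
  then show ?case by (intro continuous_on_radial_integral smooth_on_continuous)
next
  case (radial_fun_coord_mult F i)
  have "continuous_on (unit_disk n) (\<lambda>x. x i)"
    by (rule continuous_on_product_then_coordinatewise[OF continuous_on_id])
  with radial_fun_coord_mult.IH show ?case by (intro continuous_intros)
qed (auto intro!: continuous_intros)

lemma has_real_derivative_coord_update:
  "((\<lambda>s. (x(j := x j + s)) i) has_real_derivative (if i = j then 1 else 0)) (at 0)"
  by (cases "i = j") (auto intro!: derivative_eq_intros)

lemma radial_fun_has_pd:
  assumes "radial_fun n F" and j: "j < 2*n"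
  shows "\<exists>G. radial_fun n G \<and>
    (\<forall>x\<in>unit_disk n. ((\<lambda>s. F (x(j := x j + s))) has_real_derivative G x) (at 0))"
  using assms(1)
proof (induction rule: radial_fun.induct)
  case (radial_fun_integral h m)
  then show ?case
    using radial_fun.radial_fun_integral[OF smooth_on_pd[OF _ j]] has_pd_radial_integral[OF _ _ j]
    by blast
next
  case (radial_fun_coord_mult F i)
  then obtain G where G: "radial_fun n G"
    "\<And>x. x \<in> unit_disk n \<Longrightarrow> ((\<lambda>s. F (x(j := x j + s))) has_real_derivative G x) (at 0)"
    by blast
  define G' where "G' = (\<lambda>x. (if i = j then F x else 0) + x i * G x)"
  have "radial_fun n G'"
    using radial_fun_coord_mult.hyps G(1)
    by (cases "i = j") (auto simp: G'_def intro!: radial_fun.intros)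
  moreover have "((\<lambda>s. (x(j := x j + s)) i * F (x(j := x j + s))) has_real_derivative G' x) (at 0)"
    if "x \<in> unit_disk n" for x
  proof -
    have "((\<lambda>s. (x(j := x j + s)) i * F (x(j := x j + s))) has_real_derivative
        (if i = j then 1 else 0) * F x + G x * x i) (at 0)"
      using DERIV_mult[OF has_real_derivative_coord_update[of x j i] G(2)[OF that]]
      by (simp only: add_0_right fun_upd_triv)
    moreover have "(if i = j then 1 else 0) * F x + G x * x i = G' x" by (simp add: G'_def)
    ultimately show ?thesis by (simp only:)
  qed
  ultimately show ?case by blast
next
  case (radial_fun_add F G)
  then obtain F' G' where F': "radial_fun n F'"
    "\<And>x. x \<in> unit_disk n \<Longrightarrow> ((\<lambda>s. F (x(j := x j + s))) has_real_derivative F' x) (at 0)"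
    and G': "radial_fun n G'"
    "\<And>x. x \<in> unit_disk n \<Longrightarrow> ((\<lambda>s. G (x(j := x j + s))) has_real_derivative G' x) (at 0)"
    by blast
  have "((\<lambda>s. F (x(j := x j + s)) + G (x(j := x j + s))) has_real_derivative F' x + G' x) (at 0)"
    if "x \<in> unit_disk n" for x
    by (rule DERIV_add[OF F'(2)[OF that] G'(2)[OF that]])
  with F'(1) G'(1) show ?case by (blast intro: radial_fun.intros)
next
  case (radial_fun_cmult F c)
  then obtain F' where F': "radial_fun n F'"
    "\<And>x. x \<in> unit_disk n \<Longrightarrow> ((\<lambda>s. F (x(j := x j + s))) has_real_derivative F' x) (at 0)"
    by blast
  have "((\<lambda>s. c * F (x(j := x j + s))) has_real_derivative c * F' x) (at 0)"
    if "x \<in> unit_disk n" for x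
    by (rule DERIV_cmult[OF F'(2)[OF that]])
  with F'(1) show ?case by (blast intro: radial_fun.intros)
qed (auto intro: radial_fun.intros)

lemma radial_fun_iter_pd:
  assumes "radial_fun n F" and "set js \<subseteq> {..<2*n}"
  shows "\<exists>G. radial_fun n G \<and> (\<forall>x\<in>unit_disk n. iter_pd js F x = G x)"
  using assms(2)
proof (induction js rule: rev_induct)
  case (snoc j js)
  then obtain G where G: "radial_fun n G" "\<forall>x\<in>unit_disk n. iter_pd js F x = G x" by auto
  have j: "j < 2*n" using snoc.prems by auto
  obtain G' where G': "radial_fun n G'"
    "\<And>x. x \<in> unit_disk n \<Longrightarrow> ((\<lambda>s. G (x(j := x j + s))) has_real_derivative G' x) (at 0)"
    using radial_fun_has_pd[OF G(1) j] by blast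
  have "iter_pd (js @ [j]) F x = G' x" if "x \<in> unit_disk n" for x
    using pd_cong_unit_disk[OF G(2) that j] pd_eqI[OF G'(2)[OF that]] by (simp add: iter_pd_snoc)
  with G'(1) show ?case by blast
qed (use assms(1) in auto)

lemma radial_fun_smooth:
  assumes F: "radial_fun n F"
  shows "smooth_on n (unit_disk n) F"
  unfolding smooth_on_def
proof (intro allI impI, rule conjI)
  fix js assume "set js \<subseteq> {..<2*n}"
  then obtain G where G: "radial_fun n G" "\<forall>x\<in>unit_disk n. iter_pd js F x = G x"
    using radial_fun_iter_pd[OF F] by blast
  show "continuous_on (unit_disk n) (iter_pd js F)"
    using radial_fun_continuous[OF G(1)] G(2) by (auto intro: continuous_on_eq)
  show "\<forall>j<2*n. \<forall>x\<in>unit_disk n. (\<lambda>t. iter_pd js F (x(j := x j + t))) differentiable at 0"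
  proof (intro allI impI ballI)
    fix j x assume j: "j < 2*n" and x: "x \<in> unit_disk n"
    obtain G' where G': "((\<lambda>s. G (x(j := x j + s))) has_real_derivative G' x) (at 0)"
      using radial_fun_has_pd[OF G(1) j] x by blast
    have "\<forall>\<^sub>F s in nhds 0. iter_pd js F (x(j := x j + s)) = G (x(j := x j + s))"
      using eventually_unit_disk_line[OF x j] by eventually_elim (use G(2) in auto)
    with G' have "((\<lambda>t. iter_pd js F (x(j := x j + t))) has_real_derivative G' x) (at 0)"
      by (subst DERIV_cong_ev[OF refl _ refl])
    then show "(\<lambda>t. iter_pd js F (x(j := x j + t))) differentiable at 0"
      by (auto simp: real_differentiable_def)
  qed
qed

lemma coordinate_segment_integral:
  assumes der: "\<And>z. z \<in> unit_disk n \<Longrightarrow> ((\<lambda>s. g (z(j := z j + s))) has_real_derivative D z) (at 0)"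
    and seg: "\<And>r. r \<in> {0..1} \<Longrightarrow> p(j := p j + r * c) \<in> unit_disk n"
  shows "g (p(j := p j + c)) - g p = c * integral {0..1} (\<lambda>r. D (p(j := p j + r * c)))"
proof -
  have "((\<lambda>r. g (p(j := p j + r * c))) has_vector_derivative D (p(j := p j + r * c)) * c)
      (at r within {0..1})" if r: "r \<in> {0..1}" for r
  proof -
    define q where "q = p(j := p j + r * c)"
    have "q \<in> unit_disk n" using seg[OF r] by (simp only: q_def)
    from der[OF this]
    have D0: "((\<lambda>s. g (q(j := q j + s))) has_real_derivative D q) (at ((r - r) * c))" by simp
    have D1: "((\<lambda>r'. (r' - r) * c) has_real_derivative c) (at r)"
      by (auto intro!: derivative_eq_intros)
    have "q(j := q j + (r' - r) * c) = p(j := p j + r' * c)" for r'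
      by (simp add: q_def algebra_simps)
    with DERIV_chain2[OF D0 D1]
    have "((\<lambda>r'. g (p(j := p j + r' * c))) has_real_derivative D q * c) (at r)" by simp
    then show ?thesis
      by (simp add: q_def has_real_derivative_iff_has_vector_derivative has_vector_derivative_at_within)
  qed
  then have "((\<lambda>r. D (p(j := p j + r * c)) * c) has_integral g (p(j := p j + 1 * c)) - g (p(j := p j + 0 * c))) {0..1}"
    by (intro fundamental_theorem_of_calculus) (auto simp del: fun_upd_apply)
  then have "((\<lambda>r. D (p(j := p j + r * c)) * c) has_integral g (p(j := p j + c)) - g p) {0..1}"
    by simp
  then have "g (p(j := p j + c)) - g p = integral {0..1} (\<lambda>r. D (p(j := p j + r * c)) * c)"
    by (rule integral_unique[symmetric])
  then show ?thesis by (simp add: mult.commute del: fun_upd_apply)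
qed

text \<open>The directional derivative is reduced to coordinate derivatives by moving from \<open>y\<close> to
  \<open>y + h v\<close> one coordinate at a time: \<open>staircase_point y v j h r\<close> has completed the steps in the
  coordinates below \<open>j\<close> and the fraction \<open>r\<close> of the step in coordinate \<open>j\<close>.\<close>
definition staircase_point :: "point \<Rightarrow> point \<Rightarrow> nat \<Rightarrow> real \<Rightarrow> real \<Rightarrow> point" where
  "staircase_point y v j h r =
     (\<lambda>i. y i + (if i < j then h * v i else if i = j then r * (h * v i) else 0))"

lemma staircase_point_in_unit_disk:
  assumes y: "y \<in> unit_disk n" and v: "\<forall>i\<ge>2*n. v i = 0"
  obtains d where "d > 0"
    "\<And>j h r. \<bar>h\<bar> < d \<Longrightarrow> r \<in> {0..1} \<Longrightarrow> staircase_point y v j h r \<in> unit_disk n"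
proof -
  obtain d where d: "d > 0" "\<And>w h. \<bar>h\<bar> < d \<Longrightarrow> (\<forall>i\<ge>2*n. w i = 0) \<Longrightarrow>
      (\<forall>i<2*n. \<bar>w i\<bar> \<le> \<bar>h\<bar> * \<bar>v i\<bar>) \<Longrightarrow> (\<lambda>i. y i + w i) \<in> unit_disk n"
    using unit_disk_neighbourhood[OF y, of v] by blast
  have "staircase_point y v j h r \<in> unit_disk n" if h: "\<bar>h\<bar> < d" and r: "r \<in> {0..1}" for j h r
    unfolding staircase_point_def
  proof (rule d(2)[OF h])
    have "\<bar>r * (h * v i)\<bar> \<le> \<bar>h\<bar> * \<bar>v i\<bar>" for i
      using r by (simp add: abs_mult mult_left_le_one_le)
    then show "\<forall>i<2*n. \<bar>if i < j then h * v i else if i = j then r * (h * v i) else 0\<bar> \<le> \<bar>h\<bar> * \<bar>v i\<bar>"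
      by (simp add: abs_mult)
  qed (use v in auto)
  with d(1) show ?thesis by (rule that)
qed

lemma line_increment_eq_sum:
  assumes der: "\<And>z j. z \<in> unit_disk n \<Longrightarrow> j < 2*n \<Longrightarrow>
      ((\<lambda>s. g (z(j := z j + s))) has_real_derivative D j z) (at 0)"
    and v: "\<forall>i\<ge>2*n. v i = 0"
    and stairs: "\<And>j r. r \<in> {0..1} \<Longrightarrow> staircase_point y v j h r \<in> unit_disk n"
  shows "g (\<lambda>i. y i + h * v i) - g y
       = h * (\<Sum>j<2*n. v j * integral {0..1} (\<lambda>r. D j (staircase_point y v j h r)))"
proof -
  define p where "p j = staircase_point y v j h 0" for j
  have step: "g (p (Suc j)) - g (p j) = h * v j * integral {0..1} (\<lambda>r. D j (staircase_point y v j h r))"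
    if j: "j < 2*n" for j
  proof -
    have seg: "(p j)(j := p j j + r * (h * v j)) = staircase_point y v j h r" for r
      by (auto simp: p_def staircase_point_def)
    have "p (Suc j) = (p j)(j := p j j + h * v j)" by (auto simp: p_def staircase_point_def)
    with coordinate_segment_integral[of n g j "D j" "p j" "h * v j"] der[OF _ j] stairs show ?thesis
      by (simp add: seg mult_ac)
  qed
  have "p (2*n) = (\<lambda>i. y i + h * v i)" "p 0 = y"
    using v by (auto simp: p_def staircase_point_def fun_eq_iff)
  then have "g (\<lambda>i. y i + h * v i) - g y = (\<Sum>j<2*n. g (p (Suc j)) - g (p j))"
    using sum_lessThan_telescope[of "\<lambda>j. g (p j)" "2*n"] by simp
  also have "\<dots> = h * (\<Sum>j<2*n. v j * integral {0..1} (\<lambda>r. D j (staircase_point y v j h r)))"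
    using step by (simp add: sum_distrib_left mult.assoc)
  finally show ?thesis .
qed

lemma has_real_derivative_line:
  fixes g :: "point \<Rightarrow> real" and D :: "nat \<Rightarrow> point \<Rightarrow> real"
  assumes der: "\<And>z j. z \<in> unit_disk n \<Longrightarrow> j < 2*n \<Longrightarrow>
      ((\<lambda>s. g (z(j := z j + s))) has_real_derivative D j z) (at 0)"
    and cont: "\<And>j. j < 2*n \<Longrightarrow> continuous_on (unit_disk n) (D j)"
    and y: "y \<in> unit_disk n" and v: "\<forall>i\<ge>2*n. v i = 0"
  shows "((\<lambda>h. g (\<lambda>i. y i + h * v i)) has_real_derivative (\<Sum>j<2*n. v j * D j y)) (at 0)"
proof -
  define \<Phi> where "\<Phi> j = (\<lambda>h. integral {0..1} (\<lambda>r. D j (staircase_point y v j h r)))" for j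
  obtain d where d: "d > 0"
    "\<And>j h r. \<bar>h\<bar> < d \<Longrightarrow> r \<in> {0..1} \<Longrightarrow> staircase_point y v j h r \<in> unit_disk n"
    using staircase_point_in_unit_disk[OF y v] by blast
  have "isCont (\<Phi> j) 0" if j: "j < 2*n" for j
  proof -
    have "continuous_on A (\<lambda>z. staircase_point y v j (fst z) (snd z))" for A :: "(real \<times> real) set"
      unfolding staircase_point_def
    proof (intro continuous_on_coordinatewise_then_product continuous_intros)
      fix i
      show "continuous_on A (\<lambda>z. if i < j then fst z * v i else if i = j then snd z * (fst z * v i) else 0)"
        by (cases "i < j"; cases "i = j") (auto intro!: continuous_intros)
    qed
    then have "continuous_on (ball 0 d \<times> cbox 0 1) (\<lambda>z. D j (staircase_point y v j (fst z) (snd z)))"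
      by (rule continuous_on_compose2[OF cont[OF j]]) (auto simp: cbox_interval dist_real_def intro!: d(2))
    then have "continuous_on (ball 0 d) (\<Phi> j)"
      unfolding \<Phi>_def cbox_interval[symmetric] by (intro integral_continuous_on_param) (simp add: split_beta)
    then show ?thesis
      using d(1) by (simp add: continuous_on_eq_continuous_at)
  qed
  moreover have "\<Phi> j 0 = D j y" for j
    by (simp add: \<Phi>_def staircase_point_def cong: if_cong)
  ultimately have "((\<lambda>h. \<Sum>j<2*n. v j * \<Phi> j h) \<longlongrightarrow> (\<Sum>j<2*n. v j * D j y)) (at 0)"
    by (force intro!: tendsto_intros simp: isCont_def)
  moreover have "\<forall>\<^sub>F h in at 0. (\<Sum>j<2*n. v j * \<Phi> j h) =
      (g (\<lambda>i. y i + (0 + h) * v i) - g (\<lambda>i. y i + 0 * v i)) / h"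
  proof -
    have "\<forall>\<^sub>F h in at (0::real). h \<noteq> 0 \<and> \<bar>h\<bar> < d"
      using d(1) by (auto simp: eventually_at dist_real_def)
    then show ?thesis
    proof eventually_elim
      case (elim h)
      then have "g (\<lambda>i. y i + h * v i) - g y = h * (\<Sum>j<2*n. v j * \<Phi> j h)"
        unfolding \<Phi>_def by (intro line_increment_eq_sum[OF der v] d(2)) auto
      with elim show ?case by simp
    qed
  qed
  ultimately show ?thesis unfolding DERIV_def by (rule Lim_transform_eventually)
qed

lemma has_real_derivative_scale:
  assumes h: "smooth_on n (unit_disk n) h" and x: "x \<in> unit_disk n" and t: "t \<in> {0..1}"
  shows "((\<lambda>t. h (\<lambda>i. t * x i)) has_real_derivative (\<Sum>j<2*n. x j * pd j h (\<lambda>i. t * x i))) (at t)"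
proof -
  define y where "y = (\<lambda>i. t * x i)"
  have "y \<in> unit_disk n" using unit_disk_scale[OF x] t by (simp add: y_def)
  moreover have "\<forall>i\<ge>2*n. x i = 0" using x by (simp add: unit_disk_iff)
  ultimately have R: "((\<lambda>s. h (\<lambda>i. y i + s * x i)) has_real_derivative (\<Sum>j<2*n. x j * pd j h y)) (at (t - t))"
    using has_real_derivative_line[of n h "\<lambda>j. pd j h"] smooth_on_has_pd[OF h] continuous_on_pd[OF h]
    by simp
  have D1: "((\<lambda>t'. t' - t) has_real_derivative 1) (at t)"
    by (auto intro!: derivative_eq_intros)
  have "(\<lambda>i. y i + (t' - t) * x i) = (\<lambda>i. t' * x i)" for t'
    by (simp add: y_def algebra_simps)
  with DERIV_chain2[OF R D1] show ?thesis by (simp add: y_def)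
qed

lemma radial_integral_euler:
  assumes h: "smooth_on n (unit_disk n) h" and x: "x \<in> unit_disk n" and k: "0 < k"
  shows "real k * radial_integral (k-1) h x + (\<Sum>i<2*n. x i * radial_integral k (pd i h) x) = h x"
proof -
  define f' where "f' t = real k * (t^(k-1) * h (\<lambda>i. t * x i))
      + (\<Sum>i<2*n. x i * (t^k * pd i h (\<lambda>i. t * x i)))" for t
  have "((\<lambda>t. t^k * h (\<lambda>i. t * x i)) has_vector_derivative f' t) (at t within {0..1})"
    if t: "t \<in> {0..1}" for t
  proof -
    have "((\<lambda>t. t^k * h (\<lambda>i. t * x i)) has_real_derivative
        real k * t^(k - Suc 0) * h (\<lambda>i. t * x i) + (\<Sum>j<2*n. x j * pd j h (\<lambda>i. t * x i)) * t^k) (at t)"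
      by (rule DERIV_mult[OF DERIV_pow has_real_derivative_scale[OF h x t]])
    then show ?thesis
      by (simp add: f'_def sum_distrib_left sum_distrib_right mult_ac
          has_real_derivative_iff_has_vector_derivative has_vector_derivative_at_within)
  qed
  then have "(f' has_integral (1^k * h (\<lambda>i. 1 * x i) - 0^k * h (\<lambda>i. 0 * x i))) {0..1}"
    by (intro fundamental_theorem_of_calculus) auto
  then have I1: "(f' has_integral h x) {0..1}" using k by (simp add: zero_power)
  have I2: "(f' has_integral (real k * radial_integral (k-1) h x
      + (\<Sum>i<2*n. x i * radial_integral k (pd i h) x))) {0..1}"
    unfolding f'_def radial_integral_def
    by (intro has_integral_add has_integral_mult_right has_integral_sum integrable_integral
        radial_integrand_integrable[OF _ x] smooth_on_continuous[OF h] continuous_on_pd[OF h]) auto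
  show ?thesis using has_integral_unique[OF I2 I1] .
qed

section \<open>The homotopy operator\<close>

definition homotopy_op :: "nat \<Rightarrow> nat \<Rightarrow> dform \<Rightarrow> dform" where
  "homotopy_op n k B = (\<lambda>x J. \<Sum>i<2*n. x i * radial_integral (k-1) (\<lambda>y. interior i (B y) J) x)"

lemma radial_integral_interior:
  "radial_integral m (\<lambda>y. interior i (F y) J) x
   = (if i \<in> J then 0 else insert_sign i J * radial_integral m (\<lambda>y. F y (insert i J)) x)"
  by (simp add: interior_eq radial_integral_cmult)

lemma homotopy_op_alg_form:
  assumes "\<And>y. is_alg_form n k (B y)"
  shows "is_alg_form n (k-1) (homotopy_op n k B x)"
  unfolding is_alg_form_def
proof (intro allI impI, rule ccontr)
  fix J assume ne: "homotopy_op n k B x J \<noteq> 0" and bad: "\<not> (J \<subseteq> {..<2*n} \<and> card J = k - 1)"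
  have "interior i (B y) J = 0" for i y
  proof (rule ccontr)
    assume "interior i (B y) J \<noteq> 0"
    then have "i \<notin> J" "B y (insert i J) \<noteq> 0" by (auto simp: interior_eq split: if_splits)
    with alg_form_support[OF assms this(2)] bad show False by (auto simp: card_insert_if)
  qed
  then show False using ne by (simp add: homotopy_op_def)
qed

lemma radial_fun_homotopy_op:
  assumes "smooth_form n k B"
  shows "radial_fun n (\<lambda>x. homotopy_op n k B x J)"
proof -
  have "radial_fun n (\<lambda>x. if i \<in> J then 0 else insert_sign i J * radial_integral (k-1) (\<lambda>y. B y (insert i J)) x)"
    for i using assms by (cases "i \<in> J") (auto simp: smooth_form_def intro!: radial_fun.intros)
  then show ?thesis
    unfolding homotopy_op_def radial_integral_interior by (auto intro!: radial_fun_sum radial_fun.intros)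
qed

lemma homotopy_op_smooth: "smooth_form n k B \<Longrightarrow> smooth_form n (k-1) (homotopy_op n k B)"
  using homotopy_op_alg_form radial_fun_smooth[OF radial_fun_homotopy_op]
  unfolding smooth_form_def by blast

lemma continuous_on_interior:
  assumes "\<And>L. continuous_on S (\<lambda>y. F y L)"
  shows "continuous_on S (\<lambda>y. interior a (F y) L)"
  using assms by (cases "a \<in> L") (simp_all add: interior_eq continuous_intros)

lemma Lambda_radial_integral:
  assumes x: "x \<in> unit_disk n" and cont: "\<And>L. continuous_on (unit_disk n) (\<lambda>y. F y L)"
  shows "Lambda n (\<lambda>L. radial_integral m (\<lambda>y. F y L) x) J = radial_integral m (\<lambda>y. Lambda n (F y) J) x"
proof -
  have interior_ri: "interior a (\<lambda>L. radial_integral m (\<lambda>y. G y L) x)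
      = (\<lambda>L. radial_integral m (\<lambda>y. interior a (G y) L) x)" for a G
    by (simp add: fun_eq_iff interior_eq radial_integral_cmult)
  have "Lambda n (\<lambda>L. radial_integral m (\<lambda>y. F y L) x) J
      = - (\<Sum>q<n. radial_integral m (\<lambda>y. interior q (interior (q+n) (F y)) J) x)"
    by (simp add: Lambda_eq_interior interior_ri)
  also have "\<dots> = radial_integral m (\<lambda>y. - (\<Sum>q<n. interior q (interior (q+n) (F y)) J)) x"
  proof -
    have "continuous_on (unit_disk n) (\<lambda>y. interior q (interior (q+n) (F y)) J)" for q
      by (rule continuous_on_interior[OF continuous_on_interior[OF cont]])
    then have "radial_integral m (\<lambda>y. \<Sum>q<n. interior q (interior (q+n) (F y)) J) x
        = (\<Sum>q<n. radial_integral m (\<lambda>y. interior q (interior (q+n) (F y)) J) x)"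
      by (intro radial_integral_sum[OF x]) auto
    with radial_integral_cmult[of m "-1" "\<lambda>y. \<Sum>q<n. interior q (interior (q+n) (F y)) J" x]
    show ?thesis by simp
  qed
  also have "\<dots> = radial_integral m (\<lambda>y. Lambda n (F y) J) x"
    by (simp add: Lambda_eq_interior)
  finally show ?thesis .
qed

lemma homotopy_op_primitive:
  assumes B: "smooth_form n k B" and prim: "\<forall>y\<in>unit_disk n. Lambda n (B y) = zero_form"
    and x: "x \<in> unit_disk n"
  shows "Lambda n (homotopy_op n k B x) = zero_form"
proof
  fix J
  have cont: "continuous_on (unit_disk n) (\<lambda>y. interior i (B y) L)" for i L
    by (rule continuous_on_interior, rule smooth_on_continuous[of n])
      (use B in \<open>simp add: smooth_form_def\<close>)
  have "Lambda n (homotopy_op n k B x) J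
      = (\<Sum>i<2*n. x i * Lambda n (\<lambda>L. radial_integral (k-1) (\<lambda>y. interior i (B y) L) x) J)"
    by (simp add: homotopy_op_def Lambda_linear)
  also have "\<dots> = (\<Sum>i<2*n. x i * radial_integral (k-1) (\<lambda>y. interior i (Lambda n (B y)) J) x)"
  proof (intro sum.cong refl)
    fix i
    have "Lambda n (\<lambda>L. radial_integral (k-1) (\<lambda>y. interior i (B y) L) x) J
        = radial_integral (k-1) (\<lambda>y. Lambda n (interior i (B y)) J) x"
      by (rule Lambda_radial_integral[OF x cont])
    then show "x i * Lambda n (\<lambda>L. radial_integral (k-1) (\<lambda>y. interior i (B y) L) x) J
        = x i * radial_integral (k-1) (\<lambda>y. interior i (Lambda n (B y)) J) x"
      by (simp add: Lambda_interior_commute)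
  qed
  also have "\<dots> = 0"
  proof -
    have "radial_integral (k-1) (\<lambda>y. interior i (Lambda n (B y)) J) x = radial_integral (k-1) (\<lambda>y. 0) x"
      for i by (rule radial_integral_cong[OF _ x]) (simp add: prim interior_linear)
    then show ?thesis by simp
  qed
  finally show "Lambda n (homotopy_op n k B x) J = zero_form J" by simp
qed

lemma homotopy_op_eq:
  "homotopy_op n k B x J = (\<Sum>i<2*n. if i \<in> J then 0
      else insert_sign i J * (x i * radial_integral (k-1) (\<lambda>y. B y (insert i J)) x))"
  unfolding homotopy_op_def radial_integral_interior by (intro sum.cong) auto

lemma has_pd_coord_radial_integral:
  assumes "smooth_on n (unit_disk n) h" and "x \<in> unit_disk n" and "j < 2*n"
  shows "((\<lambda>s. (x(j := x j + s)) i * radial_integral m h (x(j := x j + s))) has_real_derivative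
      (if i = j then 1 else 0) * radial_integral m h x + x i * radial_integral (Suc m) (pd j h) x) (at 0)"
  using DERIV_mult[OF has_real_derivative_coord_update[of x j i] has_pd_radial_integral[OF assms, of m]]
  by (simp only: add_0_right fun_upd_triv mult.commute[of "radial_integral (Suc m) _ _"])

lemma pd_homotopy_op:
  assumes B: "smooth_form n k B" and k: "0 < k" and x: "x \<in> unit_disk n" and j: "j < 2*n"
  shows "pd j (\<lambda>y. homotopy_op n k B y J) x = (\<Sum>i<2*n. if i \<in> J then 0 else insert_sign i J *
      ((if i = j then 1 else 0) * radial_integral (k-1) (\<lambda>y. B y (insert i J)) x
       + x i * radial_integral k (pd j (\<lambda>y. B y (insert i J))) x))"
  unfolding homotopy_op_eq
proof (intro pd_eqI DERIV_sum)
  fix i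
  have "smooth_on n (unit_disk n) (\<lambda>y. B y (insert i J))" using B by (simp add: smooth_form_def)
  from has_pd_coord_radial_integral[OF this x j, of i "k-1"] k
  show "((\<lambda>s. if i \<in> J then 0 else insert_sign i J * ((x(j := x j + s)) i
        * radial_integral (k-1) (\<lambda>y. B y (insert i J)) (x(j := x j + s)))) has_real_derivative
      (if i \<in> J then 0 else insert_sign i J *
        ((if i = j then 1 else 0) * radial_integral (k-1) (\<lambda>y. B y (insert i J)) x
         + x i * radial_integral k (pd j (\<lambda>y. B y (insert i J))) x))) (at 0)"
    by (cases "i \<in> J") (auto intro: DERIV_cmult simp del: fun_upd_apply)
qed

lemma radial_integral_d_interior_closed:
  assumes B: "smooth_form n k B" and closed: "\<forall>y\<in>unit_disk n. ext_d n B y = zero_form"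
    and x: "x \<in> unit_disk n" and K: "K \<subseteq> {..<2*n}" and i: "i < 2*n"
  shows "(\<Sum>j\<in>K. if i \<in> K - {j} then 0 else insert_sign j (K - {j}) * insert_sign i (K - {j})
           * radial_integral k (pd j (\<lambda>y. B y (insert i (K - {j})))) x)
       = radial_integral k (pd i (\<lambda>y. B y K)) x"
proof -
  define G where "G j = (\<lambda>y. if i \<in> K - {j} then 0 else insert_sign j (K - {j}) * insert_sign i (K - {j})
      * pd j (\<lambda>z. B z (insert i (K - {j}))) y)" for j
  have "continuous_on (unit_disk n) (G j)" if "j \<in> K" for j
  proof (cases "i \<in> K - {j}")
    case False
    have "j < 2*n" using that K by auto
    with B False show ?thesis
      unfolding G_def smooth_form_def by (auto intro!: continuous_intros continuous_on_pd)
  qed (simp add: G_def)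
  then have "radial_integral k (\<lambda>y. \<Sum>j\<in>K. G j y) x = (\<Sum>j\<in>K. radial_integral k (G j) x)"
    using K finite_subset by (intro radial_integral_sum[OF x]) auto
  also have "\<dots> = (\<Sum>j\<in>K. if i \<in> K - {j} then 0 else insert_sign j (K - {j}) * insert_sign i (K - {j})
           * radial_integral k (pd j (\<lambda>y. B y (insert i (K - {j})))) x)"
  proof (intro sum.cong refl)
    fix j show "radial_integral k (G j) x = (if i \<in> K - {j} then 0
        else insert_sign j (K - {j}) * insert_sign i (K - {j})
           * radial_integral k (pd j (\<lambda>y. B y (insert i (K - {j})))) x)"
    proof (cases "i \<in> K - {j}")
      case False
      then have "G j = (\<lambda>y. (insert_sign j (K - {j}) * insert_sign i (K - {j}))
          * pd j (\<lambda>z. B z (insert i (K - {j}))) y)" by (simp add: G_def del: Diff_iff)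
      with False show ?thesis by (simp add: radial_integral_cmult del: Diff_iff)
    qed (simp add: G_def)
  qed
  finally have "(\<Sum>j\<in>K. if i \<in> K - {j} then 0 else insert_sign j (K - {j}) * insert_sign i (K - {j})
           * radial_integral k (pd j (\<lambda>y. B y (insert i (K - {j})))) x)
      = radial_integral k (\<lambda>y. \<Sum>j\<in>K. G j y) x" ..
  also have "\<dots> = radial_integral k (pd i (\<lambda>y. B y K)) x"
    using closed K i unfolding G_def
    by (intro radial_integral_cong[OF _ x] ballI d_interior_closed_coeff) auto
  finally show ?thesis .
qed

lemma ext_d_homotopy_op_coeff:
  assumes B: "smooth_form n k B" and closed: "\<forall>y\<in>unit_disk n. ext_d n B y = zero_form"
    and k: "0 < k" and x: "x \<in> unit_disk n" and K: "K \<subseteq> {..<2*n}"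
  shows "ext_d n (homotopy_op n k B) x K = real (card K) * radial_integral (k-1) (\<lambda>y. B y K) x
      + (\<Sum>i<2*n. x i * radial_integral k (pd i (\<lambda>y. B y K)) x)"
proof -
  define c where "c j i = (if i \<in> K - {j} then 0 else insert_sign j (K - {j}) * insert_sign i (K - {j}))" for j i
  have "ext_d n (homotopy_op n k B) x K = (\<Sum>j\<in>K. \<Sum>i<2*n.
      c j i * (if i = j then 1 else 0) * radial_integral (k-1) (\<lambda>y. B y (insert i (K - {j}))) x
      + x i * (c j i * radial_integral k (pd j (\<lambda>y. B y (insert i (K - {j})))) x))"
    unfolding ext_d_eq if_P[OF K]
  proof (intro sum.cong refl)
    fix j assume "j \<in> K"
    with K have "j < 2*n" by auto
    show "insert_sign j (K - {j}) * pd j (\<lambda>y. homotopy_op n k B y (K - {j})) x = (\<Sum>i<2*n.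
      c j i * (if i = j then 1 else 0) * radial_integral (k-1) (\<lambda>y. B y (insert i (K - {j}))) x
      + x i * (c j i * radial_integral k (pd j (\<lambda>y. B y (insert i (K - {j})))) x))"
      unfolding pd_homotopy_op[OF B k x \<open>j < 2*n\<close>] sum_distrib_left
      by (intro sum.cong refl) (simp add: c_def algebra_simps del: Diff_iff)
  qed
  also have "\<dots> = (\<Sum>j\<in>K. radial_integral (k-1) (\<lambda>y. B y K) x)
      + (\<Sum>i<2*n. x i * (\<Sum>j\<in>K. c j i * radial_integral k (pd j (\<lambda>y. B y (insert i (K - {j})))) x))"
  proof -
    have "(\<Sum>i<2*n. c j i * (if i = j then 1 else 0) * radial_integral (k-1) (\<lambda>y. B y (insert i (K - {j}))) x)
        = radial_integral (k-1) (\<lambda>y. B y K) x" if "j \<in> K" for j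
    proof -
      have "insert j (K - {j}) = K" using that by auto
      then have "(\<Sum>i<2*n. c j i * (if i = j then 1 else 0) * radial_integral (k-1) (\<lambda>y. B y (insert i (K - {j}))) x)
          = (\<Sum>i<2*n. if i = j then radial_integral (k-1) (\<lambda>y. B y K) x else 0)"
        by (intro sum.cong) (auto simp: c_def)
      then show ?thesis using that K by auto
    qed
    then show ?thesis
      by (simp add: sum.distrib sum_distrib_left sum.swap[of _ K])
  qed
  also have "\<dots> = real (card K) * radial_integral (k-1) (\<lambda>y. B y K) x
      + (\<Sum>i<2*n. x i * radial_integral k (pd i (\<lambda>y. B y K)) x)"
  proof -
    have "c j i * r = (if i \<in> K - {j} then 0 else insert_sign j (K - {j}) * insert_sign i (K - {j}) * r)"
      for j i r by (simp add: c_def)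
    then have "(\<Sum>j\<in>K. c j i * radial_integral k (pd j (\<lambda>y. B y (insert i (K - {j})))) x)
        = radial_integral k (pd i (\<lambda>y. B y K)) x" if "i < 2*n" for i
      using radial_integral_d_interior_closed[OF B closed x K that] by (simp del: Diff_iff)
    then show ?thesis by simp
  qed
  finally show ?thesis .
qed

lemma ext_d_homotopy_op:
  assumes B: "smooth_form n k B" and closed: "\<forall>y\<in>unit_disk n. ext_d n B y = zero_form"
    and k: "0 < k" and x: "x \<in> unit_disk n"
  shows "ext_d n (homotopy_op n k B) x = B x"
proof
  fix K
  have alg: "is_alg_form n k (B y)" for y using B by (simp add: smooth_form_def)
  show "ext_d n (homotopy_op n k B) x K = B x K"
  proof (cases "K \<subseteq> {..<2*n} \<and> card K = k")
    case True
    have "smooth_on n (unit_disk n) (\<lambda>y. B y K)" using B by (simp add: smooth_form_def)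
    from radial_integral_euler[OF this x k] True show ?thesis
      by (simp add: ext_d_homotopy_op_coeff[OF B closed k x])
  next
    case False
    then have zero: "(\<lambda>y. B y K) = (\<lambda>y. 0)" using alg_form_support[OF alg] by blast
    show ?thesis
    proof (cases "K \<subseteq> {..<2*n}")
      case True
      then show ?thesis by (simp add: ext_d_homotopy_op_coeff[OF B closed k x] zero fun_cong[OF zero])
    qed (simp add: ext_d_eq fun_cong[OF zero])
  qed
qed

theorem proposition3p9:
  fixes n k :: nat and B :: dform
  assumes "0 < k" and "k \<le> n"
    and "B \<in> Pforms n k"
    and "\<forall>x\<in>unit_disk n. ext_d n B x = zero_form"
  shows "\<exists>B'. B' \<in> Pprime n (k - 1) \<and> (\<forall>x\<in>unit_disk n. B x = ext_d n B' x)"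
proof (intro exI conjI)
  have B: "smooth_form n k B" and prim: "\<forall>x\<in>unit_disk n. Lambda n (B x) = zero_form"
    using assms(3) by (auto simp: Pforms_def)
  have dB': "ext_d n (homotopy_op n k B) x = B x" if "x \<in> unit_disk n" for x
    by (rule ext_d_homotopy_op[OF B assms(4) assms(1) that])
  then show "\<forall>x\<in>unit_disk n. B x = ext_d n (homotopy_op n k B) x" by simp
  have "partial_minus n (k - 1) (homotopy_op n k B) x = zero_form" if "x \<in> unit_disk n" for x
    using assms(1,2) B prim that
    by (intro partial_minus_eq_zero_if_d_primitive) (auto simp: dB' smooth_form_def)
  then show "homotopy_op n k B \<in> Pprime n (k - 1)"
    using assms(2) homotopy_op_smooth[OF B] homotopy_op_primitive[OF B prim]
    by (simp add: Pprime_def Pforms_def)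
qed

end
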